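(* If $n\ge3$ is an odd integer, then $\lambda(\mathbb{Z}/n\mathbb{Z})=\frac1n\log2$.
   Context: For a compact abelian group $G$ with normalized Haar measure $\mu$ and (multiplicative) dual group of characters $\widehat{G}$, let $\mathbb{Z}[\widehat{G}]$ denote the ring of integral linear combinations of characters, regarded as functions on $G$. For $f\in\mathbb{Z}[\widehat{G}]$, the logarithmic Mahler measure over $G$ is $\mathsf{m}_G(f)=\int_G\log|f|\,d\mu$ (with $\log 0=-\infty$). The Lehmer constant of $G$ is $\lambda(G)=\inf\{\mathsf{m}_G(f): f\in\mathbb{Z}[\widehat{G}],\ \mathsf{m}_G(f)>0\}$. Here $\mathbb{Z}/n\mathbb{Z}$ is the finite cyclic group with the uniform probability measure; its characters are $\chi_k(j)=e^{2\pi i jk/n}$, $k=0,\dots,n-1$. *)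

theory Defs
  imports "HOL-Analysis.Analysis"
begin

definition zn_char :: "nat \<Rightarrow> nat \<Rightarrow> nat \<Rightarrow> complex" where
  "zn_char n k j = cis (2 * pi * real j * real k / real n)"

text \<open>An element of Z[dual group], given by integer coefficients c k of the characters chi_k (k < n),
  regarded as a function on Z/nZ.\<close>
definition zn_poly :: "nat \<Rightarrow> (nat \<Rightarrow> int) \<Rightarrow> nat \<Rightarrow> complex" where
  "zn_poly n c j = (\<Sum>k<n. of_int (c k) * zn_char n k j)"

definition mahler_zn :: "nat \<Rightarrow> (nat \<Rightarrow> int) \<Rightarrow> ereal" where
  "mahler_zn n c =
     (if \<exists>j<n. zn_poly n c j = 0 then -\<infinity>
      else ereal ((\<Sum>j<n. ln (cmod (zn_poly n c j))) / real n))"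

definition lehmer_zn :: "nat \<Rightarrow> ereal" where
  "lehmer_zn n = Inf {mahler_zn n c | c. mahler_zn n c > 0}"

end

theory Submission
  imports Defs "Jordan_Normal_Form.Determinant" "HOL-Number_Theory.Cong"
begin

text \<open>
  Let \<omega> = e^(2\<pi>i/n). The character table F = (\<omega>^(ij)) diagonalises the circulant
  matrix C of the coefficients of f: C F = F diag(f(0), ..., f(n-1)). As F is invertible
  (F times its conjugate is n I), the product of the values f(j) is det C, an integer; so a
  positive Mahler measure is ln |det C| / n \<ge> ln 2 / n.
  For odd n the bound is attained by f = \<chi>_0 + \<chi>_1: doubling permutes the nonzero
  residues, so over j \<noteq> 0 the product of (1 + \<omega>^j)(1 - \<omega>^j) = 1 - \<omega>^(2j) equals the
  product of 1 - \<omega>^j, which is nonzero; hence the product of 1 + \<omega>^j over all j is 2.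
\<close>

definition unit_root :: "nat \<Rightarrow> complex" where
  "unit_root n = cis (2 * pi / real n)"

lemma zn_char_eq_unit_root_power: "zn_char n k j = unit_root n ^ (j * k)"
  unfolding zn_char_def unit_root_def Complex.DeMoivre by (simp add: field_simps)

lemma unit_root_power_eq_1_iff:
  assumes "n > 0"
  shows "unit_root n ^ m = 1 \<longleftrightarrow> n dvd m"
proof -
  have "unit_root n ^ m = cis (2 * pi * real m / real n)"
    unfolding unit_root_def Complex.DeMoivre by (simp add: field_simps)
  also have "\<dots> = exp (2 * of_real pi * \<i> * of_nat m / of_nat n)"
    by (simp add: cis_conv_exp field_simps)
  finally show ?thesis
    using complex_root_unity_eq_1[of n m] assms by simp
qed

lemma unit_root_power_mod:
  assumes "n > 0"
  shows "unit_root n ^ (m mod n) = unit_root n ^ m"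
proof -
  have "unit_root n ^ m = (unit_root n ^ n) ^ (m div n) * unit_root n ^ (m mod n)"
    unfolding power_mult [symmetric] power_add [symmetric] by simp
  also have "unit_root n ^ n = 1"
    using unit_root_power_eq_1_iff [OF assms] by simp
  finally show ?thesis
    by simp
qed

lemma bij_betw_add_mod:
  fixes n :: nat
  assumes "n > 0"
  shows "bij_betw (\<lambda>m. (i + m) mod n) {..<n} {..<n}"
proof -
  have "inj_on (\<lambda>m. (i + m) mod n) {..<n}"
  proof (rule inj_onI)
    fix a b
    assume "a \<in> {..<n}" "b \<in> {..<n}" "(i + a) mod n = (i + b) mod n"
    then have "[a = b] (mod n)" "a < n" "b < n"
      by (simp_all add: cong_def [symmetric] cong_add_lcancel_nat)
    then show "a = b"
      by (simp add: cong_def)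
  qed
  moreover have "(\<lambda>m. (i + m) mod n) ` {..<n} \<subseteq> {..<n}"
    using assms by auto
  ultimately show ?thesis
    unfolding bij_betw_def using endo_inj_surj [OF finite_lessThan] by blast
qed

lemma bij_betw_mult_mod_nonzero:
  fixes a n :: nat
  assumes "coprime a n"
  shows "bij_betw (\<lambda>j. (a * j) mod n) {1..<n} {1..<n}"
proof -
  have inj: "inj_on (\<lambda>j. (a * j) mod n) {1..<n}"
  proof (rule inj_onI)
    fix j k
    assume "j \<in> {1..<n}" "k \<in> {1..<n}" "(a * j) mod n = (a * k) mod n"
    then have "[j = k] (mod n)" "j < n" "k < n"
      using assms by (simp_all add: cong_def [symmetric] cong_mult_lcancel_nat)
    then show "j = k"
      by (simp add: cong_def)
  qed
  have "(\<lambda>j. (a * j) mod n) ` {1..<n} \<subseteq> {1..<n}"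
  proof (rule image_subsetI)
    fix j :: nat
    assume j: "j \<in> {1..<n}"
    have "\<not> n dvd j"
      using j by (auto dest: dvd_imp_le)
    then have "\<not> n dvd a * j"
      using assms by (simp add: coprime_commute coprime_dvd_mult_right_iff)
    then show "(a * j) mod n \<in> {1..<n}"
      using j by (simp add: dvd_eq_mod_eq_0)
  qed
  with inj show ?thesis
    unfolding bij_betw_def using endo_inj_surj [OF finite_atLeastLessThan] by blast
qed

definition fourier_mat :: "nat \<Rightarrow> complex mat" where
  "fourier_mat n = mat n n (\<lambda>(i, j). unit_root n ^ (i * j))"

text \<open>The entries \<open>\<omega>^(-ij)\<close> and \<open>c(k - i)\<close> below are written with \<open>n - j\<close> and
  \<open>k + n - i\<close> to stay clear of truncated subtraction on \<^typ>\<open>nat\<close>.\<close>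

definition conj_fourier_mat :: "nat \<Rightarrow> complex mat" where
  "conj_fourier_mat n = mat n n (\<lambda>(i, j). unit_root n ^ ((n - j) * i))"

lemma sum_unit_root_power_shift:
  assumes "i < n" "k < n"
  shows "(\<Sum>j<n. unit_root n ^ ((i + n - k) * j)) = (if i = k then of_nat n else 0)"
proof -
  have eq_1_iff: "unit_root n ^ m = 1 \<longleftrightarrow> n dvd m" for m
    using assms by (intro unit_root_power_eq_1_iff) simp
  let ?w = "unit_root n ^ (i + n - k)"
  have "?w ^ n = 1"
    using eq_1_iff by (simp flip: power_mult)
  moreover have "?w = 1 \<longleftrightarrow> i = k"
  proof
    assume "?w = 1"
    then obtain q where q: "i + n - k = n * q"
      using eq_1_iff by auto
    with assms have "0 < n * q" "n * q < n * 2"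
      by linarith+
    then have "q = 1"
      by simp
    with q assms show "i = k"
      by simp
  qed (use eq_1_iff in simp)
  moreover have "(\<Sum>j<n. unit_root n ^ ((i + n - k) * j)) = (\<Sum>j<n. ?w ^ j)"
    by (simp add: power_mult)
  ultimately show ?thesis
    by (simp add: sum_gp_strict)
qed

lemma fourier_mat_mult_conj: "fourier_mat n * conj_fourier_mat n = of_nat n \<cdot>\<^sub>m 1\<^sub>m n"
proof (rule eq_matI)
  fix i k
  assume "i < dim_row (of_nat n \<cdot>\<^sub>m 1\<^sub>m n :: complex mat)"
    and "k < dim_col (of_nat n \<cdot>\<^sub>m 1\<^sub>m n :: complex mat)"
  then have ik: "i < n" "k < n"
    by auto
  have "(fourier_mat n * conj_fourier_mat n) $$ (i, k)
      = (\<Sum>j<n. unit_root n ^ (i * j) * unit_root n ^ ((n - k) * j))"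
    using ik by (simp add: fourier_mat_def conj_fourier_mat_def scalar_prod_def atLeast0LessThan)
  also have "\<dots> = (\<Sum>j<n. unit_root n ^ ((i + n - k) * j))"
    using ik by (intro sum.cong) (simp_all flip: power_add add: algebra_simps)
  also have "\<dots> = (of_nat n \<cdot>\<^sub>m 1\<^sub>m n :: complex mat) $$ (i, k)"
    using ik by (simp add: sum_unit_root_power_shift)
  finally show "(fourier_mat n * conj_fourier_mat n) $$ (i, k)
      = (of_nat n \<cdot>\<^sub>m 1\<^sub>m n :: complex mat) $$ (i, k)" .
qed (simp_all add: fourier_mat_def conj_fourier_mat_def)

lemma det_fourier_mat_nonzero: "det (fourier_mat n) \<noteq> 0"
proof -
  have "det (fourier_mat n) * det (conj_fourier_mat n)
      = det (of_nat n \<cdot>\<^sub>m 1\<^sub>m n :: complex mat)"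
    by (simp add: det_mult [of _ n] fourier_mat_def conj_fourier_mat_def
        flip: fourier_mat_mult_conj)
  also have "\<dots> = of_nat n ^ n"
    by simp
  finally show ?thesis
    by (cases "n = 0") auto
qed

definition circulant_mat :: "nat \<Rightarrow> (nat \<Rightarrow> int) \<Rightarrow> int mat" where
  "circulant_mat n c = mat n n (\<lambda>(i, k). c ((k + n - i) mod n))"

definition zn_poly_diag_mat :: "nat \<Rightarrow> (nat \<Rightarrow> int) \<Rightarrow> complex mat" where
  "zn_poly_diag_mat n c = mat n n (\<lambda>(i, j). if i = j then zn_poly n c j else 0)"

lemma circulant_mat_mult_fourier_mat:
  assumes "n > 0"
  shows "map_mat of_int (circulant_mat n c) * fourier_mat n = fourier_mat n * zn_poly_diag_mat n c"
proof (rule eq_matI)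
  fix i j
  assume "i < dim_row (fourier_mat n * zn_poly_diag_mat n c)"
    and "j < dim_col (fourier_mat n * zn_poly_diag_mat n c)"
  then have ij: "i < n" "j < n"
    by (simp_all add: fourier_mat_def zn_poly_diag_mat_def)
  define g where "g k = of_int (c ((k + n - i) mod n)) * unit_root n ^ (k * j)" for k
  have "(map_mat of_int (circulant_mat n c) * fourier_mat n) $$ (i, j) = (\<Sum>k<n. g k)"
    using ij
    by (simp add: fourier_mat_def circulant_mat_def g_def scalar_prod_def atLeast0LessThan)
  also have "\<dots> = (\<Sum>m<n. g ((i + m) mod n))"
    by (rule sum.reindex_bij_betw [OF bij_betw_add_mod [OF assms], symmetric])
  also have "\<dots> = (\<Sum>m<n. unit_root n ^ (i * j) * (of_int (c m) * unit_root n ^ (j * m)))"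
  proof (rule sum.cong [OF refl])
    fix m
    assume "m \<in> {..<n}"
    have "((i + m) mod n + n - i) mod n = ((i + m) mod n + (n - i)) mod n"
      using ij by simp
    also have "\<dots> = (i + m + (n - i)) mod n"
      by (simp add: mod_add_left_eq)
    also have "\<dots> = m"
      using ij \<open>m \<in> {..<n}\<close> by simp
    finally have "((i + m) mod n + n - i) mod n = m" .
    moreover have "unit_root n ^ ((i + m) mod n * j)
        = unit_root n ^ (i * j) * unit_root n ^ (j * m)"
      unfolding power_mult unit_root_power_mod [OF assms]
      by (simp flip: power_mult power_add add: algebra_simps)
    ultimately show "g ((i + m) mod n)
        = unit_root n ^ (i * j) * (of_int (c m) * unit_root n ^ (j * m))"
      by (simp add: g_def)
  qed
  also have "\<dots> = unit_root n ^ (i * j) * zn_poly n c j"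
    by (simp add: zn_poly_def zn_char_eq_unit_root_power sum_distrib_left)
  also have "\<dots> = (fourier_mat n * zn_poly_diag_mat n c) $$ (i, j)"
    using ij
    by (simp add: fourier_mat_def zn_poly_diag_mat_def scalar_prod_def
        if_distrib [of "\<lambda>x. _ * x"] cong: if_cong)
  finally show "(map_mat of_int (circulant_mat n c) * fourier_mat n) $$ (i, j)
      = (fourier_mat n * zn_poly_diag_mat n c) $$ (i, j)" .
qed (simp_all add: fourier_mat_def zn_poly_diag_mat_def circulant_mat_def)

lemma prod_zn_poly_eq_det_circulant_mat:
  assumes "n > 0"
  shows "(\<Prod>j<n. zn_poly n c j) = of_int (det (circulant_mat n c))"
proof -
  have C: "map_mat of_int (circulant_mat n c) \<in> carrier_mat n n"
    and F: "fourier_mat n \<in> carrier_mat n n"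
    and D: "zn_poly_diag_mat n c \<in> carrier_mat n n"
    by (simp_all add: circulant_mat_def fourier_mat_def zn_poly_diag_mat_def)
  have "det (fourier_mat n) * det (map_mat of_int (circulant_mat n c))
      = det (fourier_mat n) * det (zn_poly_diag_mat n c)"
    using circulant_mat_mult_fourier_mat [OF assms, of c] det_mult [OF C F] det_mult [OF F D]
    by (metis mult.commute)
  then have "of_int (det (circulant_mat n c)) = det (zn_poly_diag_mat n c)"
    using det_fourier_mat_nonzero mult_left_cancel by (metis of_int_hom.hom_det)
  also have "\<dots> = (\<Prod>j<n. zn_poly n c j)"
    by (subst det_upper_triangular [OF _ D])
      (auto simp: zn_poly_diag_mat_def prod_list_diag_prod atLeast0LessThan)
  finally show ?thesis ..
qed

lemma mahler_zn_eq_ln_norm_prod: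
  "mahler_zn n c =
    (if (\<Prod>j<n. zn_poly n c j) = 0 then -\<infinity>
     else ereal (ln (cmod (\<Prod>j<n. zn_poly n c j)) / real n))"
proof -
  have "(\<exists>j<n. zn_poly n c j = 0) \<longleftrightarrow> (\<Prod>j<n. zn_poly n c j) = 0"
    by auto
  moreover have "(\<Sum>j<n. ln (cmod (zn_poly n c j))) = ln (cmod (\<Prod>j<n. zn_poly n c j))"
    if "(\<Prod>j<n. zn_poly n c j) \<noteq> 0"
    using that by (simp add: prod_norm [symmetric]) (subst ln_prod, auto)
  ultimately show ?thesis
    by (simp add: mahler_zn_def)
qed

lemma mahler_zn_eq_ln_abs_det:
  assumes "n > 0"
  shows "mahler_zn n c =
    (if det (circulant_mat n c) = 0 then -\<infinity>
     else ereal (ln \<bar>real_of_int (det (circulant_mat n c))\<bar> / real n))"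
  by (simp add: mahler_zn_eq_ln_norm_prod prod_zn_poly_eq_det_circulant_mat [OF assms])

lemma ln_2_div_le_mahler_zn:
  assumes "mahler_zn n c > 0"
  shows "ereal (ln 2 / real n) \<le> mahler_zn n c"
proof -
  have "n > 0"
    using assms by (rule contrapos_pp) (simp add: mahler_zn_def)
  define N where "N = det (circulant_mat n c)"
  have "N \<noteq> 0" and mahler: "mahler_zn n c = ereal (ln \<bar>real_of_int N\<bar> / real n)"
    using assms mahler_zn_eq_ln_abs_det [OF \<open>n > 0\<close>, of c]
    by (auto simp: N_def split: if_splits)
  then have "ln \<bar>real_of_int N\<bar> > 0"
    using assms \<open>n > 0\<close> by (simp add: zero_less_divide_iff)
  then have "\<bar>N\<bar> \<ge> 2"
    using \<open>N \<noteq> 0\<close> by simp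
  then have "ln 2 \<le> ln \<bar>real_of_int N\<bar>"
    by simp
  with \<open>n > 0\<close> show ?thesis
    unfolding mahler by (simp add: divide_right_mono)
qed

lemma prod_one_plus_unit_root_power:
  assumes "odd n"
  shows "(\<Prod>j<n. 1 + unit_root n ^ j) = 2"
proof -
  have "n > 0"
    using assms by (rule odd_pos)
  have nonzero: "(\<Prod>j\<in>{1..<n}. 1 - unit_root n ^ j) \<noteq> 0"
    using unit_root_power_eq_1_iff [OF \<open>n > 0\<close>] by (auto dest: dvd_imp_le)
  have "(\<Prod>j\<in>{1..<n}. 1 + unit_root n ^ j) * (\<Prod>j\<in>{1..<n}. 1 - unit_root n ^ j)
      = (\<Prod>j\<in>{1..<n}. 1 - unit_root n ^ ((2 * j) mod n))"
    by (simp add: unit_root_power_mod [OF \<open>n > 0\<close>] power_mult power2_eq_square algebra_simps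
        flip: prod.distrib)
  also have "\<dots> = (\<Prod>j\<in>{1..<n}. 1 - unit_root n ^ j)"
    using assms by (intro prod.reindex_bij_betw bij_betw_mult_mod_nonzero) simp
  finally have "(\<Prod>j\<in>{1..<n}. 1 + unit_root n ^ j) = 1"
    using nonzero by simp
  moreover have "{..<n} = insert 0 {1..<n}"
    using \<open>n > 0\<close> by auto
  ultimately show ?thesis
    by simp
qed

definition chi0_plus_chi1 :: "nat \<Rightarrow> int" where
  "chi0_plus_chi1 k = (if k \<le> 1 then 1 else 0)"

lemma zn_poly_chi0_plus_chi1:
  assumes "n > 1"
  shows "zn_poly n chi0_plus_chi1 j = 1 + unit_root n ^ j"
proof -
  have "zn_poly n chi0_plus_chi1 j
      = (\<Sum>k\<in>{0, 1}. of_int (chi0_plus_chi1 k) * unit_root n ^ (j * k))"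
    unfolding zn_poly_def zn_char_eq_unit_root_power
    using assms by (intro sum.mono_neutral_right) (auto simp: chi0_plus_chi1_def)
  then show ?thesis
    by (simp add: chi0_plus_chi1_def)
qed

lemma mahler_zn_chi0_plus_chi1:
  assumes "odd n" "n > 1"
  shows "mahler_zn n chi0_plus_chi1 = ereal (ln 2 / real n)"
  using assms
  by (simp add: mahler_zn_eq_ln_norm_prod zn_poly_chi0_plus_chi1 prod_one_plus_unit_root_power)

theorem corollary4p7:
  fixes n :: nat
  assumes "n \<ge> 3" and "odd n"
  shows "lehmer_zn n = ereal (ln 2 / real n)"
proof -
  have "mahler_zn n chi0_plus_chi1 = ereal (ln 2 / real n)"
    using assms by (simp add: mahler_zn_chi0_plus_chi1)
  moreover have "ln 2 / real n > 0"
    using assms by simp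
  ultimately have attained: "ereal (ln 2 / real n) \<in> {mahler_zn n c | c. mahler_zn n c > 0}"
    by (metis (mono_tags, lifting) ereal_less(2) mem_Collect_eq)
  show ?thesis
    unfolding lehmer_zn_def
    by (intro antisym Inf_lower [OF attained] Inf_greatest) (auto intro: ln_2_div_le_mahler_zn)
qed

end
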